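(* The number of representatives for vertices on $P(s,t)$ satisfies $|\mathcal{R}_V|\le 5\sqrt{Mn}$.
   Context: $G=(V,E,w)$ is an undirected graph on $n$ vertices with integer edge weights in $[1,M]$, $s$ a source vertex, $T_s$ a shortest path tree rooted at $s$, and $P(s,t)$ the $s$-$t$ path in $T_s$. $d(\cdot,\cdot)$ is the distance in $G$, $d(s,t,v)$ the length of a shortest $s$-$t$ path in $G-v$ (vertex $v$ removed); a replacement path for $v$ is a shortest $s$-$t$ path in $G-v$. $P[a..b]$ denotes the subpath of $P$ from $a$ to $b$. Every replacement path is assumed to consist of a common prefix with $P(s,t)$, a detour part disjoint from $P(s,t)$ (apart from its endpoints), and a common suffix. Fix a target $t$ and a vertex $x$ on $P(s,t)$ (the pivot $D[t]$, the last vertex on $P(s,t)$ from a pivot set $D$). Let $v_1,\dots,v_k$ be the vertices $v\neq s$ on $P(s,t)[s..x]$ with $d(s,t,v)<d(s,x,v)+d(x,t)$ (far case II), ordered by increasing distance from $s$. In this order, each $v_i$ chooses a representative replacement path: if one of its replacement paths was already chosen by an earlier vertex it takes that one, otherwise an arbitrary one. $\mathcal{R}_V$ is the set of chosen representatives. *)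

theory Defs
  imports Complex_Main "HOL-Library.Extended_Nat"
begin

text \<open>Undirected weighted graph: vertex set V, symmetric edge relation E,
  weight function w. Paths are vertex lists.\<close>

definition is_walk :: "('a \<Rightarrow> 'a \<Rightarrow> bool) \<Rightarrow> 'a list \<Rightarrow> bool" where
  "is_walk E p \<longleftrightarrow> p \<noteq> [] \<and> (\<forall>i. Suc i < length p \<longrightarrow> E (p ! i) (p ! Suc i))"

definition walk_weight :: "('a \<Rightarrow> 'a \<Rightarrow> nat) \<Rightarrow> 'a list \<Rightarrow> nat" where
  "walk_weight w p = sum_list (map (\<lambda>(a, b). w a b) (zip p (tl p)))"

definition walks_avoiding :: "('a \<Rightarrow> 'a \<Rightarrow> bool) \<Rightarrow> 'a set \<Rightarrow> 'a \<Rightarrow> 'a \<Rightarrow> 'a list set" where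
  "walks_avoiding E X u v = {p. is_walk E p \<and> hd p = u \<and> last p = v \<and> set p \<inter> X = {}}"

text \<open>Distance from u to v in G - X (infinite if no path).
  d(u,v) = gdist E w {} u v,  d(u,v,y) = gdist E w {y} u v.\<close>
definition gdist :: "('a \<Rightarrow> 'a \<Rightarrow> bool) \<Rightarrow> ('a \<Rightarrow> 'a \<Rightarrow> nat) \<Rightarrow> 'a set \<Rightarrow> 'a \<Rightarrow> 'a \<Rightarrow> enat" where
  "gdist E w X u v = (INF p \<in> walks_avoiding E X u v. enat (walk_weight w p))"

definition replacement_path :: "('a \<Rightarrow> 'a \<Rightarrow> bool) \<Rightarrow> ('a \<Rightarrow> 'a \<Rightarrow> nat) \<Rightarrow> 'a \<Rightarrow> 'a \<Rightarrow> 'a \<Rightarrow> 'a list \<Rightarrow> bool" where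
  "replacement_path E w s t y p \<longleftrightarrow>
     p \<in> walks_avoiding E {y} s t \<and> enat (walk_weight w p) = gdist E w {y} s t"

text \<open>Subpath P[s..x] of a (simple) path P starting at s.\<close>
definition subpath_to :: "'a list \<Rightarrow> 'a \<Rightarrow> 'a list" where
  "subpath_to P x = takeWhile (\<lambda>u. u \<noteq> x) P @ [x]"

definition far_case_II :: "('a \<Rightarrow> 'a \<Rightarrow> bool) \<Rightarrow> ('a \<Rightarrow> 'a \<Rightarrow> nat) \<Rightarrow> 'a list \<Rightarrow> 'a \<Rightarrow> 'a \<Rightarrow> 'a \<Rightarrow> 'a set" where
  "far_case_II E w P s t x = {v \<in> set (subpath_to P x). v \<noteq> s \<and>
       gdist E w {v} s t < gdist E w {v} s x + gdist E w {} x t}"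

definition prefix_detour_suffix :: "'a list \<Rightarrow> 'a list \<Rightarrow> bool" where
  "prefix_detour_suffix P Q \<longleftrightarrow> (\<exists>i j D. i < j \<and> j < length P \<and>
       Q = take (Suc i) P @ D @ drop j P \<and> set D \<inter> set P = {})"

end

theory Submission
  imports Defs
begin

(* Call a far case II vertex fresh if no earlier vertex chose the same path; the representatives
   are exactly the paths R v of the k fresh vertices v. Along P the fresh paths get strictly
   lighter, so their excesses w(R v) - w(P) are k distinct naturals summing to at least
   k(k - 1)/2.

   Each R v leaves P at a branching point before v and returns after x. Let near v be the vertices
   of this detour at detour distance less than excess v / 2 from the branching point; as edges
   weigh at most M, there are at least excess v / (2M) of them. An exchange argument shows that
   R u avoids near v whenever u lies strictly before the branching point of R v, and every vertex
   before a fresh v lies at or before it. So for fresh u < v < v' the set near v' misses R u, which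
   contains near u: no vertex is near three fresh vertices. Hence the total excess is at most
   2M * 2n, and k^2 <= 9Mn. *)

lemma distinct_nth_in_set_take_iff:
  "distinct xs \<Longrightarrow> k < length xs \<Longrightarrow> xs ! k \<in> set (take n xs) \<longleftrightarrow> k < n"
  by (auto simp: in_set_conv_nth nth_eq_iff_index_eq)

lemma distinct_nth_in_set_drop_iff:
  "distinct xs \<Longrightarrow> k < length xs \<Longrightarrow> xs ! k \<in> set (drop n xs) \<longleftrightarrow> n \<le> k"
  by (auto simp: in_set_conv_nth nth_eq_iff_index_eq intro!: exI[of _ "k - n"])

lemma card_mult_pred_le_double_sum:
  fixes A :: "nat set"
  assumes "finite A"
  shows "card A * (card A - 1) \<le> 2 * \<Sum>A"
  using assms
proof (induction A rule: finite_linorder_max_induct)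
  case (insert b A)
  have "card A \<le> b"
    using card_mono[of "{..<b}" A] insert.hyps by auto
  moreover have "Suc (card A) * card A = card A * (card A - 1) + 2 * card A"
    by (cases "card A") simp_all
  moreover have "b \<notin> A"
    using insert.hyps(2) by blast
  ultimately show ?case
    using insert by simp
qed simp

lemma three_le_card_obtain_less_less:
  fixes N :: "'a :: linorder set"
  assumes "finite N" "3 \<le> card N"
  obtains a b c where "a \<in> N" "b \<in> N" "c \<in> N" "a < b" "b < c"
proof -
  have "N \<noteq> {}"
    using assms by auto
  have "card {Min N, Max N} \<le> 2"
    by (simp add: card_insert_if)
  then have "\<not> N \<subseteq> {Min N, Max N}"
    using assms(2) card_mono[of "{Min N, Max N}" N] by auto
  then obtain b where b: "b \<in> N" "b \<noteq> Min N" "b \<noteq> Max N"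
    by blast
  then have "Min N < b" "b < Max N"
    using assms \<open>N \<noteq> {}\<close> by (simp_all add: order.not_eq_order_implies_strict)
  moreover have "Min N \<in> N" "Max N \<in> N"
    using assms \<open>N \<noteq> {}\<close> by simp_all
  ultimately show ?thesis
    using that b(1) by blast
qed

section \<open>Walks\<close>

lemma walk_weight_Nil [simp]: "walk_weight w [] = 0"
  by (simp add: walk_weight_def)

lemma walk_weight_singleton [simp]: "walk_weight w [a] = 0"
  by (simp add: walk_weight_def)

lemma walk_weight_Cons_Cons [simp]: "walk_weight w (a # b # p) = w a b + walk_weight w (b # p)"
  by (simp add: walk_weight_def)

lemma is_walk_singleton [simp]: "is_walk E [a]"
  by (simp add: is_walk_def)

lemma is_walk_Cons_Cons [simp]: "is_walk E (a # b # p) \<longleftrightarrow> E a b \<and> is_walk E (b # p)"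
  by (auto simp: is_walk_def less_Suc_eq_0_disj)

lemma not_is_walk_Nil [simp]: "\<not> is_walk E []"
  by (simp add: is_walk_def)

lemma is_walk_append:
  "xs \<noteq> [] \<Longrightarrow> ys \<noteq> [] \<Longrightarrow>
     is_walk E (xs @ ys) \<longleftrightarrow> is_walk E xs \<and> E (last xs) (hd ys) \<and> is_walk E ys"
  by (induction xs rule: induct_list012) (auto simp: neq_Nil_conv)

lemma walk_weight_append:
  "xs \<noteq> [] \<Longrightarrow> ys \<noteq> [] \<Longrightarrow>
     walk_weight w (xs @ ys) = walk_weight w xs + w (last xs) (hd ys) + walk_weight w ys"
  by (induction xs rule: induct_list012) (auto simp: neq_Nil_conv)

lemma is_walk_append_tl:
  assumes "is_walk E p" "is_walk E q" "last p = hd q"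
  shows "is_walk E (p @ tl q)"
proof -
  have "p \<noteq> []"
    using assms(1) by auto
  with assms show ?thesis
    by (cases q rule: remdups_adj.cases) (auto simp: is_walk_append)
qed

lemma walk_weight_append_tl:
  "p \<noteq> [] \<Longrightarrow> last p = hd q \<Longrightarrow> walk_weight w (p @ tl q) = walk_weight w p + walk_weight w q"
  by (cases q rule: remdups_adj.cases) (auto simp: walk_weight_append)

lemma is_walk_take: "is_walk E p \<Longrightarrow> 0 < n \<Longrightarrow> is_walk E (take n p)"
  unfolding is_walk_def by auto

lemma is_walk_drop: "is_walk E p \<Longrightarrow> n < length p \<Longrightarrow> is_walk E (drop n p)"
  unfolding is_walk_def by auto

lemma is_walk_infix: "is_walk E (xs @ ys @ zs) \<Longrightarrow> ys \<noteq> [] \<Longrightarrow> is_walk E ys"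
  using is_walk_take[OF is_walk_drop, of E "xs @ ys @ zs" "length xs" "length ys"] by simp

lemma is_walk_rev:
  assumes "\<And>a b. E a b \<Longrightarrow> E b a"
  shows "is_walk E p \<Longrightarrow> is_walk E (rev p)"
proof (induction p rule: induct_list012)
  case (3 a b p)
  then show ?case
    using assms[of a b] is_walk_append[of "rev (b # p)" "[a]" E] by simp
qed auto

lemma walk_weight_rev:
  assumes "\<And>a b. E a b \<Longrightarrow> w a b = w b a"
  shows "is_walk E p \<Longrightarrow> walk_weight w (rev p) = walk_weight w p"
proof (induction p rule: induct_list012)
  case (3 a b p)
  then show ?case
    using assms[of a b] walk_weight_append[of "rev (b # p)" "[a]" w] by simp
qed auto

lemma walk_weight_take_drop:
  assumes "i < length p"
  shows "walk_weight w p = walk_weight w (take (Suc i) p) + walk_weight w (drop i p)"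
proof -
  have "walk_weight w p = walk_weight w (take (Suc i) p @ tl (drop i p))"
    by (metis append_take_drop_id drop_Suc tl_drop)
  also have "\<dots> = walk_weight w (take (Suc i) p) + walk_weight w (drop i p)"
    using assms by (intro walk_weight_append_tl) (auto simp: take_Suc_conv_app_nth hd_drop_conv_nth)
  finally show ?thesis .
qed

lemma walk_weight_le_length:
  assumes "\<And>a b. E a b \<Longrightarrow> w a b \<le> M"
  shows "is_walk E p \<Longrightarrow> walk_weight w p \<le> (length p - 1) * M"
proof (induction p rule: induct_list012)
  case (3 a b p)
  then show ?case
    using assms[of a b] by simp
qed auto

lemma length_le_walk_weight:
  assumes "\<And>a b. E a b \<Longrightarrow> 1 \<le> w a b"
  shows "is_walk E p \<Longrightarrow> length p - 1 \<le> walk_weight w p"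
proof (induction p rule: induct_list012)
  case (3 a b p)
  then have "1 \<le> w a b" "length p \<le> walk_weight w (b # p)"
    using assms[of a b] by auto
  then show ?case
    by simp
qed auto

lemma walk_weight_take_less:
  assumes "is_walk E p" "\<And>a b. E a b \<Longrightarrow> 1 \<le> w a b" "i < j" "j < length p"
  shows "walk_weight w (take (Suc i) p) < walk_weight w (take (Suc j) p)"
proof -
  define q where "q = drop i (take (Suc j) p)"
  have "i < length (take (Suc j) p)"
    using assms(3,4) by simp
  from walk_weight_take_drop[OF this, of w]
  have "walk_weight w (take (Suc j) p) = walk_weight w (take (Suc i) p) + walk_weight w q"
    using assms(3) by (simp add: q_def)
  moreover have "is_walk E q"
    using assms(1,3,4) by (simp add: q_def is_walk_drop is_walk_take)
  then have "length q - 1 \<le> walk_weight w q"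
    using length_le_walk_weight assms(2) by blast
  moreover have "length q - 1 = j - i"
    using assms(3,4) by (simp add: q_def)
  ultimately show ?thesis
    using assms(3) by linarith
qed

lemma set_walk_subset:
  "is_walk E p \<Longrightarrow> hd p \<in> V \<Longrightarrow> (\<And>a b. E a b \<Longrightarrow> a \<in> V \<and> b \<in> V) \<Longrightarrow> set p \<subseteq> V"
  by (induction p rule: induct_list012) auto

lemma walks_avoiding_singleton_iff:
  "p \<in> walks_avoiding E {y} u v \<longleftrightarrow> p \<in> walks_avoiding E {} u v \<and> y \<notin> set p"
  by (auto simp: walks_avoiding_def)

lemma walks_avoiding_append_tl:
  assumes "p \<in> walks_avoiding E X u v" "q \<in> walks_avoiding E X v z"
  shows "p @ tl q \<in> walks_avoiding E X u z"
proof -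
  have "p \<noteq> []" "q \<noteq> []"
    using assms by (auto simp: walks_avoiding_def)
  then have "last (p @ tl q) = last q"
    using assms by (cases q rule: remdups_adj.cases) (auto simp: walks_avoiding_def)
  with \<open>p \<noteq> []\<close> \<open>q \<noteq> []\<close> assms show ?thesis
    by (auto simp: walks_avoiding_def is_walk_append_tl dest: list.set_sel(2))
qed

lemma walks_avoiding_rev:
  "(\<And>a b. E a b \<Longrightarrow> E b a) \<Longrightarrow> p \<in> walks_avoiding E X u v \<Longrightarrow> rev p \<in> walks_avoiding E X v u"
  by (auto simp: walks_avoiding_def is_walk_rev hd_rev last_rev)

lemma walks_avoiding_take:
  assumes "p \<in> walks_avoiding E X u v" "i < length p"
  shows "take (Suc i) p \<in> walks_avoiding E X u (p ! i)"
proof -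
  have "last (take (Suc i) p) = p ! i"
    using assms(2) by (simp add: take_Suc_conv_app_nth)
  with assms show ?thesis
    by (auto simp: walks_avoiding_def is_walk_take dest: in_set_takeD)
qed

lemma walks_avoiding_drop:
  "p \<in> walks_avoiding E X u v \<Longrightarrow> i < length p \<Longrightarrow> drop i p \<in> walks_avoiding E X (p ! i) v"
  by (auto simp: walks_avoiding_def is_walk_drop hd_drop_conv_nth dest: in_set_dropD)

lemma walk_weight_append_tl_walks:
  "p \<in> walks_avoiding E X u v \<Longrightarrow> q \<in> walks_avoiding E Y v z \<Longrightarrow>
     walk_weight w (p @ tl q) = walk_weight w p + walk_weight w q"
  by (auto simp: walks_avoiding_def intro: walk_weight_append_tl)

lemma gdist_le_walk_weight: "p \<in> walks_avoiding E X u v \<Longrightarrow> gdist E w X u v \<le> enat (walk_weight w p)"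
  unfolding gdist_def by (rule INF_lower)

lemma le_gdist:
  "(\<And>p. p \<in> walks_avoiding E X u v \<Longrightarrow> c \<le> enat (walk_weight w p)) \<Longrightarrow> c \<le> gdist E w X u v"
  unfolding gdist_def by (rule INF_greatest)

lemma shortest_walk_prefix:
  assumes p: "p \<in> walks_avoiding E X u v" "enat (walk_weight w p) = gdist E w X u v"
    and i: "i < length p"
  shows "gdist E w X u (p ! i) = walk_weight w (take (Suc i) p)"
proof (rule antisym)
  show "gdist E w X u (p ! i) \<le> walk_weight w (take (Suc i) p)"
    using p(1) i by (intro gdist_le_walk_weight walks_avoiding_take)
  show "enat (walk_weight w (take (Suc i) p)) \<le> gdist E w X u (p ! i)"
  proof (rule le_gdist)
    fix q assume q: "q \<in> walks_avoiding E X u (p ! i)"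
    have "q @ tl (drop i p) \<in> walks_avoiding E X u v"
      using walks_avoiding_append_tl[OF q walks_avoiding_drop[OF p(1) i]] .
    then have "walk_weight w p \<le> walk_weight w (q @ tl (drop i p))"
      using p(2) gdist_le_walk_weight by (metis enat_ord_simps(1))
    also have "\<dots> = walk_weight w q + walk_weight w (drop i p)"
      using q i by (intro walk_weight_append_tl) (auto simp: walks_avoiding_def hd_drop_conv_nth)
    finally show "enat (walk_weight w (take (Suc i) p)) \<le> walk_weight w q"
      using walk_weight_take_drop[OF i, of w] by simp
  qed
qed

lemma shortest_walk_distinct:
  assumes p: "p \<in> walks_avoiding E X u v" "enat (walk_weight w p) = gdist E w X u v"
    and w_pos: "\<And>a b. E a b \<Longrightarrow> 1 \<le> w a b"
  shows "distinct p"
proof (rule ccontr)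
  assume "\<not> distinct p"
  then obtain i j where ij: "i < j" "j < length p" "p ! i = p ! j"
    by (metis distinct_conv_nth linorder_neqE_nat)
  have pre: "take (Suc i) p \<in> walks_avoiding E X u (p ! j)"
    using walks_avoiding_take[OF p(1), of i] ij by simp
  have suf: "drop j p \<in> walks_avoiding E X (p ! j) v"
    using walks_avoiding_drop[OF p(1) ij(2)] .
  have "walk_weight w p \<le> walk_weight w (take (Suc i) p @ tl (drop j p))"
    using walks_avoiding_append_tl[OF pre suf] p(2) gdist_le_walk_weight
    by (metis enat_ord_simps(1))
  also have "\<dots> = walk_weight w (take (Suc i) p) + walk_weight w (drop j p)"
    using pre suf by (rule walk_weight_append_tl_walks)
  also have "\<dots> < walk_weight w (take (Suc j) p) + walk_weight w (drop j p)"
    using walk_weight_take_less[of E p w, OF _ w_pos ij(1,2)] p(1) by (simp add: walks_avoiding_def)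
  finally show False
    using walk_weight_take_drop[OF ij(2), of w] by linarith
qed

section \<open>Representatives of the far case II vertices\<close>

locale replacement_paths =
  fixes V :: "'a set" and E :: "'a \<Rightarrow> 'a \<Rightarrow> bool" and w :: "'a \<Rightarrow> 'a \<Rightarrow> nat"
    and M :: nat and s t x :: 'a and P :: "'a list" and R :: "'a \<Rightarrow> 'a list"
  assumes finite_V: "finite V"
    and E_V: "\<And>u v. E u v \<Longrightarrow> u \<in> V \<and> v \<in> V"
    and E_sym: "\<And>u v. E u v \<Longrightarrow> E v u"
    and w_sym: "\<And>u v. E u v \<Longrightarrow> w u v = w v u"
    and w_range: "\<And>u v. E u v \<Longrightarrow> 1 \<le> w u v \<and> w u v \<le> M"
    and s_V: "s \<in> V"
    and P_path: "P \<in> walks_avoiding E {} s t" "distinct P"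
    and P_shortest: "enat (walk_weight w P) = gdist E w {} s t"
    and x_on_P: "x \<in> set P"
    and shape: "\<And>v Q. v \<in> set P \<Longrightarrow> v \<noteq> s \<Longrightarrow> replacement_path E w s t v Q
                  \<Longrightarrow> prefix_detour_suffix P Q"
    and R_repl: "\<And>v. v \<in> far_case_II E w P s t x \<Longrightarrow> replacement_path E w s t v (R v)"
    and R_greedy: "\<And>v. v \<in> far_case_II E w P s t x \<Longrightarrow>
        (\<exists>u \<in> far_case_II E w P s t x. gdist E w {} s u < gdist E w {} s v
             \<and> replacement_path E w s t v (R u)) \<Longrightarrow>
        (\<exists>u \<in> far_case_II E w P s t x. gdist E w {} s u < gdist E w {} s v \<and> R v = R u)"
begin

abbreviation far :: "'a set" where
  "far \<equiv> far_case_II E w P s t x"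

lemma w_pos: "E a b \<Longrightarrow> 1 \<le> w a b"
  and w_le_M: "E a b \<Longrightarrow> w a b \<le> M"
  using w_range by simp_all

lemma is_walk_P: "is_walk E P"
  using P_path(1) by (simp add: walks_avoiding_def)

lemma set_P_subset_V: "set P \<subseteq> V"
  using set_walk_subset[OF is_walk_P _ E_V] P_path(1) s_V by (simp add: walks_avoiding_def)

definition pos :: "'a \<Rightarrow> nat" where
  "pos v = (LEAST i. P ! i = v)"

lemma pos_less_length: "v \<in> set P \<Longrightarrow> pos v < length P"
  and nth_pos [simp]: "v \<in> set P \<Longrightarrow> P ! pos v = v"
proof -
  assume "v \<in> set P"
  then obtain i where i: "i < length P" "P ! i = v"
    by (auto simp: in_set_conv_nth)
  then show "pos v < length P" "P ! pos v = v"
    unfolding pos_def by (auto intro: LeastI Least_le order.strict_trans1)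
qed

lemma pos_nth [simp]: "i < length P \<Longrightarrow> pos (P ! i) = i"
  using P_path(2) by (metis nth_eq_iff_index_eq nth_mem nth_pos pos_less_length)

lemma pos_inj: "inj_on pos (set P)"
  by (metis inj_onI nth_pos)

lemma in_set_take_P_iff: "v \<in> set P \<Longrightarrow> v \<in> set (take n P) \<longleftrightarrow> pos v < n"
  using distinct_nth_in_set_take_iff[OF P_path(2) pos_less_length] by simp

lemma in_set_drop_P_iff: "v \<in> set P \<Longrightarrow> v \<in> set (drop n P) \<longleftrightarrow> n \<le> pos v"
  using distinct_nth_in_set_drop_iff[OF P_path(2) pos_less_length] by simp

lemma dist_from_s_less_iff:
  assumes "u \<in> set P" "v \<in> set P"
  shows "gdist E w {} s u < gdist E w {} s v \<longleftrightarrow> pos u < pos v"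
proof -
  have dist: "gdist E w {} s y = walk_weight w (take (Suc (pos y)) P)" if "y \<in> set P" for y
    using shortest_walk_prefix[OF P_path(1) P_shortest pos_less_length[OF that]] that by simp
  have "walk_weight w (take (Suc i) P) < walk_weight w (take (Suc j) P)"
    if "i < j" "j < length P" for i j
    using walk_weight_take_less[where w = w, OF is_walk_P w_pos that] by blast
  then show ?thesis
    using assms pos_less_length by (simp add: dist) (metis linorder_neqE_nat not_less_iff_gr_or_eq)
qed

lemma subpath_to_x: "subpath_to P x = take (Suc (pos x)) P"
proof -
  have "takeWhile (\<lambda>u. u \<noteq> x) P = take (pos x) P"
    using x_on_P pos_less_length by (intro takeWhile_eq_take_P_nth) (auto dest: pos_nth)
  then show ?thesis
    using x_on_P pos_less_length by (simp add: subpath_to_def take_Suc_conv_app_nth)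
qed

lemma far_D:
  assumes "v \<in> far"
  shows "v \<in> set P" "pos v \<le> pos x"
    and "gdist E w {v} s t < gdist E w {v} s x + gdist E w {} x t"
  using assms in_set_take_P_iff[of v "Suc (pos x)"]
  by (auto simp: far_case_II_def subpath_to_x dest: in_set_takeD)

lemma repl_path:
  assumes "v \<in> far"
  shows "R v \<in> walks_avoiding E {v} s t" "enat (walk_weight w (R v)) = gdist E w {v} s t"
  using R_repl[OF assms] by (auto simp: replacement_path_def)

lemma repl_weight_le:
  "v \<in> far \<Longrightarrow> Q \<in> walks_avoiding E {v} s t \<Longrightarrow> walk_weight w (R v) \<le> walk_weight w Q"
  using gdist_le_walk_weight repl_path(2) by (metis enat_ord_simps(1))

lemma repl_weight_le_three_walks:
  assumes "v \<in> far" "A \<in> walks_avoiding E {v} s a" "B \<in> walks_avoiding E {v} a b"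
    and "C \<in> walks_avoiding E {v} b t"
  shows "walk_weight w (R v) \<le> walk_weight w A + walk_weight w B + walk_weight w C"
proof -
  have "B @ tl C \<in> walks_avoiding E {v} a t"
    using assms(3,4) by (rule walks_avoiding_append_tl)
  then have "walk_weight w (R v) \<le> walk_weight w (A @ tl (B @ tl C))"
    using repl_weight_le[OF assms(1) walks_avoiding_append_tl[OF assms(2)]] by blast
  also have "\<dots> = walk_weight w A + walk_weight w B + walk_weight w C"
    using assms(2-4) \<open>B @ tl C \<in> _\<close> by (simp add: walk_weight_append_tl_walks)
  finally show ?thesis .
qed

lemma set_repl_subset_V: "v \<in> far \<Longrightarrow> set (R v) \<subseteq> V"
  using set_walk_subset[where E = E, OF _ _ E_V] repl_path(1) s_V by (simp add: walks_avoiding_def)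

lemma distinct_repl: "v \<in> far \<Longrightarrow> distinct (R v)"
  using shortest_walk_distinct[where w = w, OF repl_path w_pos] by blast

lemma P_weight_le_repl_weight: "v \<in> far \<Longrightarrow> walk_weight w P \<le> walk_weight w (R v)"
  using repl_path(1) gdist_le_walk_weight P_shortest
  by (metis enat_ord_simps(1) walks_avoiding_singleton_iff)

text \<open>This is where the far case II inequality is used.\<close>
lemma x_notin_repl:
  assumes v: "v \<in> far"
  shows "x \<notin> set (R v)"
proof
  assume "x \<in> set (R v)"
  then obtain p where p: "p < length (R v)" "R v ! p = x"
    by (auto simp: in_set_conv_nth)
  have "gdist E w {v} s x \<le> walk_weight w (take (Suc p) (R v))"
    using walks_avoiding_take[OF repl_path(1)[OF v] p(1)] p(2) by (simp add: gdist_le_walk_weight)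
  moreover have "gdist E w {} x t \<le> walk_weight w (drop p (R v))"
    using walks_avoiding_drop[OF repl_path(1)[OF v] p(1)] p(2)
    by (simp add: gdist_le_walk_weight walks_avoiding_singleton_iff)
  ultimately have "gdist E w {v} s x + gdist E w {} x t \<le> walk_weight w (R v)"
    using walk_weight_take_drop[OF p(1), of w] by (metis add_mono plus_enat_simps(1))
  then show False
    using far_D(3)[OF v] repl_path(2)[OF v] by simp
qed

definition decomp :: "'a \<Rightarrow> nat \<times> nat \<times> 'a list" where
  "decomp v = (SOME (i, j, D). i < j \<and> j < length P \<and> R v = take (Suc i) P @ D @ drop j P
                  \<and> set D \<inter> set P = {})"

definition branch :: "'a \<Rightarrow> nat" where
  "branch v = fst (decomp v)"

definition rejoin :: "'a \<Rightarrow> nat" where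
  "rejoin v = fst (snd (decomp v))"

definition detour :: "'a \<Rightarrow> 'a list" where
  "detour v = snd (snd (decomp v))"

lemma decomp:
  assumes "v \<in> far"
  shows "branch v < rejoin v" "rejoin v < length P"
    and "R v = take (Suc (branch v)) P @ detour v @ drop (rejoin v) P"
    and "set (detour v) \<inter> set P = {}"
proof -
  have "prefix_detour_suffix P (R v)"
    using assms shape far_D(1) R_repl by (auto simp: far_case_II_def)
  then have "\<exists>ijD. (\<lambda>(i, j, D). i < j \<and> j < length P \<and> R v = take (Suc i) P @ D @ drop j P
                  \<and> set D \<inter> set P = {}) ijD"
    unfolding prefix_detour_suffix_def by auto
  from someI_ex[OF this] show "branch v < rejoin v" "rejoin v < length P"
    and "R v = take (Suc (branch v)) P @ detour v @ drop (rejoin v) P"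
    and "set (detour v) \<inter> set P = {}"
    unfolding branch_def rejoin_def detour_def decomp_def by auto
qed

lemma in_set_P_in_repl_iff:
  assumes "v \<in> far" "y \<in> set P"
  shows "y \<in> set (R v) \<longleftrightarrow> pos y \<le> branch v \<or> rejoin v \<le> pos y"
proof -
  have "y \<notin> set (detour v)"
    using decomp(4)[OF assms(1)] assms(2) by blast
  then show ?thesis
    using assms by (subst decomp(3)[OF assms(1)]) (auto simp: in_set_take_P_iff in_set_drop_P_iff)
qed

lemma branch_less_pos: "v \<in> far \<Longrightarrow> branch v < pos v"
  and pos_x_less_rejoin: "v \<in> far \<Longrightarrow> pos x < rejoin v"
  using in_set_P_in_repl_iff[of v v] in_set_P_in_repl_iff[of v x] repl_path(1)[of v]
    x_notin_repl[of v] far_D(1,2)[of v] x_on_P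
  by (force simp: walks_avoiding_def)+

lemma far_notin_repl:
  assumes "u \<in> far" "v \<in> far" "pos u \<le> pos v"
  shows "v \<notin> set (R u)"
  using in_set_P_in_repl_iff[OF assms(1) far_D(1)[OF assms(2)]] assms
    branch_less_pos[OF assms(1)] pos_x_less_rejoin[OF assms(1)] far_D(2)[OF assms(2)]
  by linarith

definition detour_walk :: "'a \<Rightarrow> 'a list" where
  "detour_walk v = P ! branch v # detour v @ [P ! rejoin v]"

lemma repl_eq_detour_walk:
  assumes "v \<in> far"
  shows "R v = take (branch v) P @ detour_walk v @ drop (Suc (rejoin v)) P"
  using decomp[OF assms]
  by (simp add: detour_walk_def take_Suc_conv_app_nth Cons_nth_drop_Suc[symmetric])

lemma set_detour_walk_subset_repl: "v \<in> far \<Longrightarrow> set (detour_walk v) \<subseteq> set (R v)"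
  by (subst repl_eq_detour_walk) auto

lemma detour_walk_in_walks_avoiding:
  assumes "v \<in> far"
  shows "detour_walk v \<in> walks_avoiding E {v} (P ! branch v) (P ! rejoin v)"
proof -
  have "is_walk E (take (branch v) P @ detour_walk v @ drop (Suc (rejoin v)) P)"
    using repl_path(1)[OF assms] repl_eq_detour_walk[OF assms] by (simp add: walks_avoiding_def)
  then have "is_walk E (detour_walk v)"
    by (rule is_walk_infix) (simp add: detour_walk_def)
  then show ?thesis
    using repl_path(1)[OF assms] set_detour_walk_subset_repl[OF assms]
    by (auto simp: walks_avoiding_def detour_walk_def)
qed

lemma set_detour_walk_inter_P:
  "v \<in> far \<Longrightarrow> set (detour_walk v) \<inter> set P \<subseteq> {P ! branch v, P ! rejoin v}"
  using decomp(4) by (auto simp: detour_walk_def)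

lemma repl_weight_split:
  assumes "v \<in> far"
  shows "walk_weight w (R v) = walk_weight w (take (Suc (branch v)) P)
           + walk_weight w (detour_walk v) + walk_weight w (drop (rejoin v) P)"
proof -
  note d = decomp[OF assms]
  have pre: "take (Suc (branch v)) P \<in> walks_avoiding E {} s (P ! branch v)"
    using walks_avoiding_take[OF P_path(1)] d(1,2) by simp
  have suf: "drop (rejoin v) P \<in> walks_avoiding E {} (P ! rejoin v) t"
    using walks_avoiding_drop[OF P_path(1) d(2)] .
  have mid: "detour_walk v \<in> walks_avoiding E {} (P ! branch v) (P ! rejoin v)"
    using detour_walk_in_walks_avoiding[OF assms] by (simp add: walks_avoiding_singleton_iff)
  have "R v = take (Suc (branch v)) P @ tl (detour_walk v @ tl (drop (rejoin v) P))"
    using d by (simp add: detour_walk_def Cons_nth_drop_Suc[symmetric])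
  then show ?thesis
    using walk_weight_append_tl_walks[OF pre walks_avoiding_append_tl[OF mid suf]]
      walk_weight_append_tl_walks[OF mid suf] by simp
qed

definition excess :: "'a \<Rightarrow> nat" where
  "excess v = walk_weight w (R v) - walk_weight w P"

lemma excess_less_detour_walk_weight:
  assumes "v \<in> far"
  shows "excess v < walk_weight w (detour_walk v)"
proof -
  note d = decomp[OF assms]
  have "walk_weight w (take (Suc (branch v)) P) < walk_weight w (take (Suc (rejoin v)) P)"
    using walk_weight_take_less[where w = w, OF is_walk_P w_pos d(1,2)] by blast
  moreover have "1 \<le> walk_weight w (detour_walk v)"
    using length_le_walk_weight[where E = E and w = w, OF w_pos, of "detour_walk v"]
      detour_walk_in_walks_avoiding[OF assms]
    by (force simp: walks_avoiding_def detour_walk_def)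
  ultimately show ?thesis
    using repl_weight_split[OF assms] walk_weight_take_drop[OF d(2), of w] by (simp add: excess_def)
qed

definition fresh :: "'a set" where
  "fresh = {v \<in> far. \<forall>u \<in> far. pos u < pos v \<longrightarrow> R u \<noteq> R v}"

lemma fresh_subset_far: "fresh \<subseteq> far"
  by (auto simp: fresh_def)

lemma image_R_far: "R ` far = R ` fresh"
proof
  show "R ` far \<subseteq> R ` fresh"
  proof
    fix r assume "r \<in> R ` far"
    then obtain u where u: "u \<in> far" "R u = r" "\<And>v. v \<in> far \<Longrightarrow> R v = r \<Longrightarrow> pos u \<le> pos v"
      using ex_has_least_nat[of "\<lambda>v. v \<in> far \<and> R v = r" _ pos] by blast
    then have "u \<in> fresh"
      by (auto simp: fresh_def not_less[symmetric])
    with u(2) show "r \<in> R ` fresh"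
      by blast
  qed
qed (use fresh_subset_far in blast)

lemma finite_fresh: "finite fresh"
  using fresh_subset_far far_D(1) finite_subset[of fresh "set P"] by blast

lemma repl_weight_fresh_less:
  assumes u: "u \<in> far" and v: "v \<in> fresh" and before: "pos u < pos v"
  shows "walk_weight w (R v) < walk_weight w (R u)"
proof -
  have vF: "v \<in> far"
    using v fresh_subset_far by blast
  have avoid: "R u \<in> walks_avoiding E {v} s t"
    using repl_path(1)[OF u] far_notin_repl[OF u vF] before
    by (simp add: walks_avoiding_singleton_iff)
  have "\<not> replacement_path E w s t v (R u)"
  proof
    assume "replacement_path E w s t v (R u)"
    moreover have "gdist E w {} s u < gdist E w {} s v"
      using dist_from_s_less_iff far_D(1) u vF before by blast
    ultimately obtain u' where "u' \<in> far" "gdist E w {} s u' < gdist E w {} s v" "R v = R u'"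
      using R_greedy[OF vF] u by blast
    then show False
      using v dist_from_s_less_iff far_D(1) vF by (auto simp: fresh_def)
  qed
  then have "walk_weight w (R u) \<noteq> walk_weight w (R v)"
    using avoid repl_path(2)[OF vF] by (auto simp: replacement_path_def)
  then show ?thesis
    using repl_weight_le[OF vF avoid] by simp
qed

lemma pos_le_branch_fresh:
  assumes u: "u \<in> far" and v: "v \<in> fresh" and before: "pos u < pos v"
  shows "pos u \<le> branch v"
proof (rule ccontr)
  assume "\<not> pos u \<le> branch v"
  moreover have vF: "v \<in> far"
    using v fresh_subset_far by blast
  ultimately have "u \<notin> set (R v)"
    using in_set_P_in_repl_iff[OF vF far_D(1)[OF u]] before far_D(2)[OF u]
      pos_x_less_rejoin[OF vF] by linarith
  then have "walk_weight w (R u) \<le> walk_weight w (R v)"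
    using repl_weight_le[OF u] repl_path(1)[OF vF] by (simp add: walks_avoiding_singleton_iff)
  then show False
    using repl_weight_fresh_less[OF assms] by simp
qed

lemma inj_on_excess_fresh: "inj_on excess fresh"
proof (rule inj_onI)
  fix u v assume u: "u \<in> fresh" and v: "v \<in> fresh" and eq: "excess u = excess v"
  have "u \<in> far" "v \<in> far"
    using u v fresh_subset_far by blast+
  then have "walk_weight w (R u) = walk_weight w (R v)"
    using eq P_weight_le_repl_weight[of u] P_weight_le_repl_weight[of v] unfolding excess_def
    by linarith
  then have "pos u = pos v"
    using repl_weight_fresh_less[OF \<open>u \<in> far\<close> v] repl_weight_fresh_less[OF \<open>v \<in> far\<close> u]
    by (metis less_irrefl linorder_neqE_nat)
  then show "u = v"
    using pos_inj far_D(1) \<open>u \<in> far\<close> \<open>v \<in> far\<close> by (meson inj_onD)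
qed

definition near :: "'a \<Rightarrow> 'a set" where
  "near v = {detour_walk v ! k | k. k < length (detour_walk v)
               \<and> 2 * walk_weight w (take (Suc k) (detour_walk v)) < excess v}"

lemma near_subset_repl: "v \<in> far \<Longrightarrow> near v \<subseteq> set (R v)"
  using set_detour_walk_subset_repl by (force simp: near_def)

lemma before_branch_notin_detour_walk:
  assumes "v \<in> far" "u \<in> set P" "pos u < branch v"
  shows "u \<notin> set (detour_walk v)"
proof
  assume "u \<in> set (detour_walk v)"
  then have "pos u = branch v \<or> pos u = rejoin v"
    using set_detour_walk_inter_P[OF assms(1)] decomp(1,2)[OF assms(1)] assms(2) by auto
  then show False
    using assms(3) decomp(1)[OF assms(1)] by auto
qed

text \<open>Exchange argument at a vertex \<open>z\<close> where \<open>R u\<close> meets the detour walk of \<open>v\<close>: following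
  \<open>R u\<close> to \<open>z\<close>, back along the detour walk and then along \<open>P\<close> avoids \<open>u\<close>; following \<open>P\<close>
  to the branching point, the detour walk to \<open>z\<close> and then \<open>R u\<close> avoids \<open>v\<close>. Together these
  walks use \<open>R u\<close> and \<open>P\<close> once and the detour walk up to \<open>z\<close> twice.\<close>
lemma excess_le_crossing:
  assumes u: "u \<in> far" and v: "v \<in> far" and before: "pos u < branch v"
    and k: "k < length (detour_walk v)"
    and p: "p < length (R u)" "R u ! p = detour_walk v ! k"
  shows "excess v \<le> 2 * walk_weight w (take (Suc k) (detour_walk v))"
proof -
  define i where "i = branch v"
  define z where "z = detour_walk v ! k"
  define arc where "arc = take (Suc k) (detour_walk v)"
  have i: "i < length P" "i < pos v"
    using decomp(1,2)[OF v] branch_less_pos[OF v] by (simp_all add: i_def)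
  have arc: "arc \<in> walks_avoiding E {v} (P ! i) z"
    using walks_avoiding_take[OF detour_walk_in_walks_avoiding[OF v] k]
    by (simp add: arc_def z_def i_def)
  have "u \<notin> set arc"
    using before_branch_notin_detour_walk[OF v far_D(1)[OF u] before]
    by (auto simp: arc_def dest: in_set_takeD)
  have "walk_weight w (R u)
      \<le> walk_weight w (take (Suc p) (R u)) + walk_weight w (rev arc) + walk_weight w (drop i P)"
  proof (rule repl_weight_le_three_walks[OF u])
    show "take (Suc p) (R u) \<in> walks_avoiding E {u} s z"
      using walks_avoiding_take[OF repl_path(1)[OF u] p(1)] p(2) by (simp add: z_def)
    show "rev arc \<in> walks_avoiding E {u} z (P ! i)"
      using walks_avoiding_rev[where E = E, OF E_sym] arc \<open>u \<notin> set arc\<close>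
      by (simp add: walks_avoiding_singleton_iff)
    show "drop i P \<in> walks_avoiding E {u} (P ! i) t"
      using walks_avoiding_drop[OF P_path(1) i(1)] in_set_drop_P_iff[OF far_D(1)[OF u]] before
      by (simp add: walks_avoiding_singleton_iff i_def)
  qed
  moreover have "walk_weight w (R v)
      \<le> walk_weight w (take (Suc i) P) + walk_weight w arc + walk_weight w (drop p (R u))"
  proof (rule repl_weight_le_three_walks[OF v])
    show "take (Suc i) P \<in> walks_avoiding E {v} s (P ! i)"
      using walks_avoiding_take[OF P_path(1) i(1)] in_set_take_P_iff[OF far_D(1)[OF v]] i(2)
      by (simp add: walks_avoiding_singleton_iff)
    show "arc \<in> walks_avoiding E {v} (P ! i) z"
      using arc .
    show "drop p (R u) \<in> walks_avoiding E {v} z t"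
      using walks_avoiding_drop[OF repl_path(1)[OF u] p(1)] p(2) far_notin_repl[OF u v] before i(2)
      by (auto simp: walks_avoiding_singleton_iff z_def i_def dest: in_set_dropD)
  qed
  moreover have "walk_weight w (rev arc) = walk_weight w arc"
    using walk_weight_rev[where E = E and w = w, OF w_sym] arc by (simp add: walks_avoiding_def)
  ultimately show ?thesis
    using walk_weight_take_drop[OF p(1), of w] walk_weight_take_drop[OF i(1), of w]
    by (simp add: excess_def arc_def)
qed

lemma near_disjoint_repl:
  assumes "u \<in> far" "v \<in> far" "pos u < branch v"
  shows "near v \<inter> set (R u) = {}"
proof (rule ccontr)
  assume "near v \<inter> set (R u) \<noteq> {}"
  then obtain k p where k: "k < length (detour_walk v)"
      and close: "2 * walk_weight w (take (Suc k) (detour_walk v)) < excess v"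
      and p: "p < length (R u)" "R u ! p = detour_walk v ! k"
    unfolding near_def by (auto simp: in_set_conv_nth)
  then show False
    using excess_le_crossing[OF assms k p] by linarith
qed

lemma card_near_owners_le_2: "card {v \<in> fresh. z \<in> near v} \<le> 2"
proof (rule ccontr)
  define Z where "Z = {v \<in> fresh. z \<in> near v}"
  assume "\<not> card {v \<in> fresh. z \<in> near v} \<le> 2"
  moreover have "Z \<subseteq> set P"
    using fresh_subset_far far_D(1) by (auto simp: Z_def)
  ultimately have "3 \<le> card (pos ` Z)"
    using card_image[OF inj_on_subset[OF pos_inj]] by (simp add: Z_def)
  moreover have "finite (pos ` Z)"
    using \<open>Z \<subseteq> set P\<close> finite_subset by blast
  ultimately obtain u v v' where "u \<in> Z" "v \<in> Z" "v' \<in> Z" "pos u < pos v" "pos v < pos v'"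
    using three_le_card_obtain_less_less[of "pos ` Z"] by blast
  then have "u \<in> far" "v \<in> far" "v' \<in> fresh" "z \<in> near u" "z \<in> near v'"
    using fresh_subset_far by (auto simp: Z_def)
  moreover have "pos u < branch v'"
    using pos_le_branch_fresh[OF \<open>v \<in> far\<close> \<open>v' \<in> fresh\<close> \<open>pos v < pos v'\<close>] \<open>pos u < pos v\<close>
    by simp
  ultimately show False
    using near_disjoint_repl[of u v'] near_subset_repl[of u] fresh_subset_far by blast
qed

lemma sum_card_near_le: "(\<Sum>v\<in>fresh. card (near v)) \<le> 2 * card V"
proof -
  have "near v = {z \<in> V. z \<in> near v}" if "v \<in> fresh" for v
    using that fresh_subset_far near_subset_repl set_repl_subset_V by blast
  then have "(\<Sum>v\<in>fresh. card (near v)) = (\<Sum>v\<in>fresh. card {z \<in> V. z \<in> near v})"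
    by (metis (no_types, lifting) sum.cong)
  also have "\<dots> = (\<Sum>z\<in>V. card {v \<in> fresh. z \<in> near v})"
    by (rule sum_multicount_gen[OF finite_fresh finite_V]) simp
  also have "\<dots> \<le> (\<Sum>z\<in>V. 2)"
    using card_near_owners_le_2 by (rule sum_mono)
  finally show ?thesis
    by simp
qed

lemma excess_le_card_near:
  assumes v: "v \<in> far"
  shows "excess v \<le> 2 * M * card (near v)"
proof (cases "excess v = 0")
  case False
  define W where "W = detour_walk v"
  define c where "c = (excess v - 1) div (2 * M)"
  have W: "is_walk E W" "distinct W"
    using detour_walk_in_walks_avoiding[OF v] distinct_repl[OF v] repl_eq_detour_walk[OF v]
    by (auto simp: W_def walks_avoiding_def)
  have excess_less: "excess v < (length W - 1) * M"
    using excess_less_detour_walk_weight[OF v]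
      walk_weight_le_length[where E = E and w = w, OF w_le_M W(1)]
    by (simp add: W_def)
  then have M: "0 < M"
    by (auto intro: gr0I)
  have "c * (2 * M) \<le> excess v - 1"
    unfolding c_def by (rule div_times_less_eq_dividend)
  then have c_excess: "c * (2 * M) < excess v"
    using False by linarith
  then have "c * 2 * M < (length W - 1) * M"
    using excess_less by (simp only: mult.assoc)
  then have c: "c < length W"
    by auto
  have "W ! k \<in> near v" if "k \<le> c" for k
  proof -
    have "walk_weight w (take (Suc k) W) \<le> k * M"
      using walk_weight_le_length[where E = E and w = w, OF w_le_M is_walk_take[OF W(1)], of "Suc k"]
        that c by simp
    also have "\<dots> \<le> c * M"
      using that by simp
    finally have "2 * walk_weight w (take (Suc k) W) < excess v"
      using c_excess by simp
    then show ?thesis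
      using that c by (auto simp: near_def W_def)
  qed
  then have "(!) W ` {..c} \<subseteq> near v"
    by blast
  moreover have "inj_on ((!) W) {..c}"
    using W(2) c by (simp add: inj_on_def nth_eq_iff_index_eq)
  moreover have "finite (near v)"
    using finite_subset[OF near_subset_repl[OF v]] by blast
  ultimately have "Suc c \<le> card (near v)"
    using card_mono[of "near v" "(!) W ` {..c}"] card_image[of "(!) W" "{..c}"] by simp
  moreover have "excess v - 1 < 2 * M + c * (2 * M)"
    unfolding c_def using M by (intro dividend_less_div_times) simp
  then have "excess v \<le> 2 * M * Suc c"
    by (simp add: mult.commute)
  ultimately show ?thesis
    by (metis le_trans mult_le_mono2)
qed simp

lemma one_le_M: "v \<in> far \<Longrightarrow> 1 \<le> M"
  using detour_walk_in_walks_avoiding[of v] w_pos w_le_M order.trans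
  by (cases "detour v") (force simp: walks_avoiding_def detour_walk_def)+

lemma card_fresh_squared_le: "card fresh * card fresh \<le> 9 * (M * card V)"
proof (cases "fresh = {}")
  case False
  define k where "k = card fresh"
  have "k * (k - 1) \<le> 2 * \<Sum>(excess ` fresh)"
    using card_mult_pred_le_double_sum[of "excess ` fresh"] finite_fresh
      card_image[OF inj_on_excess_fresh] by (simp add: k_def)
  also have "\<Sum>(excess ` fresh) = (\<Sum>v\<in>fresh. excess v)"
    using sum.reindex[OF inj_on_excess_fresh, of id] by simp
  also have "\<dots> \<le> (\<Sum>v\<in>fresh. 2 * M * card (near v))"
    using excess_le_card_near fresh_subset_far by (intro sum_mono) blast
  also have "\<dots> \<le> 2 * M * (2 * card V)"
    using sum_card_near_le by (simp add: sum_distrib_left[symmetric])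
  finally have "k * (k - 1) \<le> 8 * (M * card V)"
    by simp
  moreover have "k \<le> card V"
    using card_mono[OF finite_V] fresh_subset_far far_D(1) set_P_subset_V
    by (metis k_def subset_iff)
  moreover have "1 \<le> M"
    using False fresh_subset_far one_le_M by blast
  then have "card V \<le> M * card V"
    by simp
  moreover have "k * k = k * (k - 1) + k"
    by (cases k) simp_all
  ultimately show ?thesis
    unfolding k_def by linarith
qed simp

lemma card_image_R_far_le: "real (card (R ` far)) \<le> 3 * sqrt (real M * real (card V))"
proof -
  have "card (R ` far) \<le> card fresh"
    unfolding image_R_far using finite_fresh by (rule card_image_le)
  then have "card (R ` far) * card (R ` far) \<le> 9 * (M * card V)"
    using card_fresh_squared_le mult_le_mono order.trans by blast
  then have "real (card (R ` far)) ^ 2 \<le> 9 * (real M * real (card V))"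
    by (simp add: power2_eq_square flip: of_nat_mult of_nat_le_iff)
  then have "real (card (R ` far)) \<le> sqrt (9 * (real M * real (card V)))"
    by (rule real_le_rsqrt)
  then show ?thesis
    by (simp add: real_sqrt_mult)
qed

end

theorem lemma9:
  fixes V :: "'a set" and E :: "'a \<Rightarrow> 'a \<Rightarrow> bool" and w :: "'a \<Rightarrow> 'a \<Rightarrow> nat"
    and M :: nat and s t x :: 'a and P :: "'a list" and R :: "'a \<Rightarrow> 'a list"
  assumes finV: "finite V"
    and E_V: "\<And>u v. E u v \<Longrightarrow> u \<in> V \<and> v \<in> V"
    and E_sym: "\<And>u v. E u v \<Longrightarrow> E v u"
    and E_irrefl: "\<And>u. \<not> E u u"
    and w_sym: "\<And>u v. E u v \<Longrightarrow> w u v = w v u"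
    and w_range: "\<And>u v. E u v \<Longrightarrow> 1 \<le> w u v \<and> w u v \<le> M"
    and s_V: "s \<in> V"
    and P_path: "P \<in> walks_avoiding E {} s t" "distinct P"
    and P_shortest: "enat (walk_weight w P) = gdist E w {} s t"
    and x_on_P: "x \<in> set P"
    and shape: "\<And>v Q. v \<in> set P \<Longrightarrow> v \<noteq> s \<Longrightarrow> replacement_path E w s t v Q
                  \<Longrightarrow> prefix_detour_suffix P Q"
    and R_repl: "\<And>v. v \<in> far_case_II E w P s t x \<Longrightarrow> replacement_path E w s t v (R v)"
    and R_greedy: "\<And>v. v \<in> far_case_II E w P s t x \<Longrightarrow>
        (\<exists>u \<in> far_case_II E w P s t x. gdist E w {} s u < gdist E w {} s v
             \<and> replacement_path E w s t v (R u)) \<Longrightarrow>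
        (\<exists>u \<in> far_case_II E w P s t x. gdist E w {} s u < gdist E w {} s v \<and> R v = R u)"
  shows "real (card (R ` far_case_II E w P s t x)) \<le> 5 * sqrt (real M * real (card V))"
proof -
  interpret replacement_paths V E w M s t x P R
    by (rule replacement_paths.intro; fact)
  have "3 * sqrt (real M * real (card V)) \<le> 5 * sqrt (real M * real (card V))"
    by simp
  then show ?thesis
    using card_image_R_far_le by linarith
qed

end
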